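(* Let $f$ be a positive definite function and let $W=\{w_1,\dots,w_N\}\subset V$ be a norming set for $\mathcal{B}_M$. Let $\mathrm{Q}_Wx=\sum_{k=1}^N\mu_kx(w_k)$ be a quadrature rule (with real weights $\mu_k$) that is exact on $\mathcal{N}_{K_f,W}$, i.e. $\frac1n\sum_{i=1}^n y(v_i)=\mathrm{Q}_Wy$ for all $y\in\mathcal{N}_{K_f,W}$. Then for every $x\in\mathcal{L}(G)$, $$\Big|\frac1n\sum_{i=1}^nx(v_i)-\mathrm{Q}_Wx\Big|\le\big(1+\|(\mathbf{S}_W\mathbf{B}_M)^{-1}\|\big)\Big(\sum_{k=M+1}^n\hat{f}_k\Big)^{1/2}\|x\|_{K_f}.$$
   Context: Let $G$ be a graph with vertex set $V=\{v_1,\dots,v_n\}$, symmetric non-negative weighted adjacency matrix $\mathbf{A}$, degree matrix $\mathbf{D}=\mathrm{diag}(\sum_k\mathbf{A}_{ik})$ (positive), and normalized Laplacian $\mathbf{L}=\mathbf{I}_n-\mathbf{D}^{-1/2}\mathbf{A}\mathbf{D}^{-1/2}$. Signals are vectors in $\mathcal{L}(G)\cong\mathbb{R}^n$ with euclidean norm and standard basis $e_1,\dots,e_n$. Fix an orthonormal eigendecomposition $\mathbf{L}=\mathbf{U}\,\mathrm{diag}(\lambda_1,\dots,\lambda_n)\mathbf{U}^\intercal$ with columns $u_1,\dots,u_n$. Fourier transform $\hat{x}=\mathbf{U}^\intercal x$; convolution operator $\mathbf{C}_x=\mathbf{U}\,\mathrm{diag}(\hat{x})\mathbf{U}^\intercal$.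 For $f\in\mathcal{L}(G)$ let $(\mathbf{K}_f)_{ij}=(\mathbf{C}_{e_j}f)(v_i)$; $f$ is a positive definite function if $\mathbf{K}_f$ is symmetric strictly positive definite; then $\|x\|_{K_f}=\sqrt{x^\intercal\mathbf{K}_f^{-1}x}$. For distinct nodes $w_k=v_{j_k}$, $\mathcal{N}_{K_f,W}=\mathrm{span}\{\mathbf{C}_{e_{j_1}}f,\dots,\mathbf{C}_{e_{j_N}}f\}$. Let $\mathcal{B}_M=\mathrm{span}\{u_1,\dots,u_M\}$, $\mathbf{S}_Wx(v)=x(v)$ for $v\in W$ and $0$ otherwise, $\mathbf{B}_Mx=\sum_{k=1}^M(u_k^\intercal x)u_k$. $W$ is a norming set for $\mathcal{B}_M$ if $\mathbf{S}_W\mathbf{B}_M$ is injective on $\mathcal{B}_M$; $\|(\mathbf{S}_W\mathbf{B}_M)^{-1}\|$ is the euclidean operator norm of the inverse of $\mathbf{S}_W\mathbf{B}_M|_{\mathcal{B}_M}$ on its image $\mathbf{S}_W(\mathcal{B}_M)$. *)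

theory Defs
  imports "Jordan_Normal_Form.Matrix"
begin

text \<open>Vertices v_1..v_n are identified with indices 0..n-1; signals are vectors in carrier_vec n.
  The eigenvector u_(k+1) of the paper is column k of U (0-based).\<close>

definition degree :: "real mat \<Rightarrow> nat \<Rightarrow> real" where
  "degree A i = (\<Sum>k<dim_col A. A $$ (i, k))"

definition norm_laplacian :: "real mat \<Rightarrow> real mat" where
  "norm_laplacian A = 1\<^sub>m (dim_row A) -
     mat (dim_row A) (dim_row A) (\<lambda>(i,j). A $$ (i,j) / (sqrt (degree A i) * sqrt (degree A j)))"

definition diag_of :: "nat \<Rightarrow> (nat \<Rightarrow> real) \<Rightarrow> real mat" where
  "diag_of n d = mat n n (\<lambda>(i,j). if i = j then d i else 0)"

definition vnorm :: "real vec \<Rightarrow> real" where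
  "vnorm v = sqrt (scalar_prod v v)"

definition gft :: "real mat \<Rightarrow> real vec \<Rightarrow> real vec" where
  "gft U x = mult_mat_vec (transpose_mat U) x"

definition conv_op :: "real mat \<Rightarrow> real vec \<Rightarrow> real mat" where
  "conv_op U x = U * diag_of (dim_row U) (\<lambda>k. gft U x $ k) * transpose_mat U"

definition kernel_mat :: "real mat \<Rightarrow> real vec \<Rightarrow> real mat" where
  "kernel_mat U f = mat (dim_row U) (dim_row U)
     (\<lambda>(i,j). (mult_mat_vec (conv_op U (unit_vec (dim_row U) j)) f) $ i)"

definition pos_def_mat :: "nat \<Rightarrow> real mat \<Rightarrow> bool" where
  "pos_def_mat n K \<longleftrightarrow> K \<in> carrier_mat n n \<and> transpose_mat K = K \<and>
     (\<forall>x \<in> carrier_vec n. x \<noteq> 0\<^sub>v n \<longrightarrow> scalar_prod x (mult_mat_vec (K) x) > 0)"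

definition pos_def_fun :: "real mat \<Rightarrow> real vec \<Rightarrow> bool" where
  "pos_def_fun U f \<longleftrightarrow> pos_def_mat (dim_row U) (kernel_mat U f)"

definition mat_inv :: "nat \<Rightarrow> real mat \<Rightarrow> real mat" where
  "mat_inv n K = (SOME B. B \<in> carrier_mat n n \<and> K * B = 1\<^sub>m n \<and> B * K = 1\<^sub>m n)"

definition native_norm :: "real mat \<Rightarrow> real vec \<Rightarrow> real vec \<Rightarrow> real" where
  "native_norm U f x = sqrt (scalar_prod x (mult_mat_vec (mat_inv (dim_row U) (kernel_mat U f)) x))"

text \<open>Nodes w_k = v_(j k), k < N.\<close>
definition native_span :: "real mat \<Rightarrow> real vec \<Rightarrow> nat \<Rightarrow> (nat \<Rightarrow> nat) \<Rightarrow> real vec set" where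
  "native_span U f N j = {vec (dim_row U) (\<lambda>i. \<Sum>k<N. c k * (mult_mat_vec (conv_op U (unit_vec (dim_row U) (j k))) f) $ i)
       | c. True}"

definition bandlimited :: "real mat \<Rightarrow> nat \<Rightarrow> real vec set" where
  "bandlimited U M = {vec (dim_row U) (\<lambda>i. \<Sum>k<M. c k * U $$ (i, k)) | c. True}"

definition sampling_op :: "nat \<Rightarrow> (nat \<Rightarrow> nat) \<Rightarrow> real vec \<Rightarrow> real vec" where
  "sampling_op N j x = vec (dim_vec x) (\<lambda>i. if i \<in> j ` {..<N} then x $ i else 0)"

definition bl_proj :: "real mat \<Rightarrow> nat \<Rightarrow> real vec \<Rightarrow> real vec" where
  "bl_proj U M x = vec (dim_row U) (\<lambda>i. \<Sum>k<M. scalar_prod (col U k) x * U $$ (i, k))"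

definition SB_op :: "real mat \<Rightarrow> nat \<Rightarrow> nat \<Rightarrow> (nat \<Rightarrow> nat) \<Rightarrow> real vec \<Rightarrow> real vec" where
  "SB_op U M N j x = sampling_op N j (bl_proj U M x)"

definition norming_set :: "real mat \<Rightarrow> nat \<Rightarrow> nat \<Rightarrow> (nat \<Rightarrow> nat) \<Rightarrow> bool" where
  "norming_set U M N j \<longleftrightarrow> inj_on (SB_op U M N j) (bandlimited U M)"

text \<open>Euclidean operator norm of the inverse of S_W B_M restricted to B_M, on its image S_W(B_M)
  (0 if the image is the zero space).\<close>
definition SB_inv_norm :: "real mat \<Rightarrow> nat \<Rightarrow> nat \<Rightarrow> (nat \<Rightarrow> nat) \<Rightarrow> real" where
  "SB_inv_norm U M N j =
     (let T = SB_op U M N j; B = bandlimited U M; Ti = inv_into B T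
      in Sup (insert 0 {vnorm (Ti z) / vnorm z | z. z \<in> T ` B \<and> z \<noteq> 0\<^sub>v (dim_row U)}))"

end

theory Submission
  imports Defs "Jordan_Normal_Form.Determinant" "HOL-Analysis.Convex"
begin

(* Write the quadrature error as x \<mapsto> e \<bullet> x. In the eigenbasis U the kernel matrix K of f is
   diagonal, with the Fourier coefficients f_k of f on the diagonal; they are positive since f is
   positive definite. Cauchy-Schwarz for the K-inner product gives |e \<bullet> x| \<le> sqrt (e \<bullet> K e) |x|_K.
   Exactness on the span of the columns K e_w (w in W) says that the representer r = K e
   vanishes on W. Split r = P + Q with P = B_M r band-limited. Since S_W r = 0, the norming
   inequality gives |P| \<le> C |S_W P| = C |S_W Q| \<le> C |Q| for C = |(S_W B_M)^-1|, so
   |r| \<le> (1 + C) |Q|. The Fourier coefficients of r are f_k times those of e, whence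
   |Q|^2 \<le> T (e \<bullet> K e) with T the sum of the f_k over the high frequencies k \<ge> M. Finally
   e \<bullet> K e = e \<bullet> r is the mean of r, at most |r|; so e \<bullet> K e \<le> (1 + C) sqrt T sqrt (e \<bullet> K e). *)

\<comment> \<open>HOL-Analysis writes its inner product with the same symbol as the scalar product of vectors.\<close>
no_notation inner (infix "\<bullet>" 70)

lemma sum_if_less_eq:
  fixes f :: "nat \<Rightarrow> 'a::comm_monoid_add"
  assumes "M \<le> n"
  shows "(\<Sum>k<n. if k < M then f k else 0) = (\<Sum>k<M. f k)"
proof -
  have "{..<n} \<inter> {k. k < M} = {..<M}" using assms by auto
  then show ?thesis by (simp add: sum.If_cases)
qed

lemma sum_if_less_else_eq:
  fixes f :: "nat \<Rightarrow> 'a::comm_monoid_add"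
  shows "(\<Sum>k<n. if k < M then 0 else f k) = (\<Sum>k\<in>{M..<n}. f k)"
proof -
  have "{..<n} \<inter> - {k. k < M} = {M..<n}" by auto
  then show ?thesis by (simp add: sum.If_cases)
qed

lemma sqrt_le_if_le_mult_sqrt:
  fixes R a :: real
  assumes "0 \<le> R" "0 \<le> a" "R \<le> a * sqrt R"
  shows "sqrt R \<le> a"
proof (cases "R = 0")
  case False
  then have "0 < sqrt R" using assms(1) by simp
  moreover have "sqrt R * sqrt R \<le> a * sqrt R" using assms(1,3) by simp
  ultimately show ?thesis by (meson mult_right_le_imp_le)
qed (use assms(2) in simp)

section \<open>Euclidean norm of real vectors\<close>

lemma scalar_prod_self_nonneg: "0 \<le> (v :: real vec) \<bullet> v"
  by (simp add: scalar_prod_def sum_nonneg)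

lemma scalar_prod_self_eq_0_iff:
  assumes "(v :: real vec) \<in> carrier_vec n"
  shows "v \<bullet> v = 0 \<longleftrightarrow> v = 0\<^sub>v n"
  using assms by (auto simp: scalar_prod_def sum_nonneg_eq_0_iff intro!: eq_vecI)

lemma scalar_prod_square_le:
  assumes "(v :: real vec) \<in> carrier_vec n" "w \<in> carrier_vec n"
  shows "(v \<bullet> w)\<^sup>2 \<le> (v \<bullet> v) * (w \<bullet> w)"
  using Cauchy_Schwarz_ineq_sum[of "\<lambda>i. v $ i" "\<lambda>i. w $ i" "{0..<n}"] assms
  by (simp add: scalar_prod_def power2_eq_square)

lemma vnorm_nonneg: "0 \<le> vnorm v"
  using scalar_prod_self_nonneg[of v] by (simp add: vnorm_def)

lemma vnorm_square: "(vnorm v)\<^sup>2 = v \<bullet> v"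
  using scalar_prod_self_nonneg[of v] by (simp add: vnorm_def)

lemma vnorm_pos:
  assumes "v \<in> carrier_vec n" "v \<noteq> 0\<^sub>v n"
  shows "0 < vnorm v"
  using assms scalar_prod_self_nonneg[of v] scalar_prod_self_eq_0_iff[OF assms(1)]
  by (simp add: vnorm_def)

lemma abs_scalar_prod_le_vnorm:
  assumes "v \<in> carrier_vec n" "w \<in> carrier_vec n"
  shows "\<bar>v \<bullet> w\<bar> \<le> vnorm v * vnorm w"
proof -
  have "(v \<bullet> w)\<^sup>2 \<le> (vnorm v * vnorm w)\<^sup>2"
    using scalar_prod_square_le[OF assms] by (simp add: power_mult_distrib vnorm_square)
  then show ?thesis
    by (metis power2_abs power2_le_imp_le mult_nonneg_nonneg vnorm_nonneg)
qed

lemma vnorm_triangle: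
  assumes "v \<in> carrier_vec n" "w \<in> carrier_vec n"
  shows "vnorm (v + w) \<le> vnorm v + vnorm w"
proof -
  have "(v + w) \<bullet> (v + w) = v \<bullet> v + 2 * (v \<bullet> w) + w \<bullet> w"
    using assms by (simp add: add_scalar_prod_distrib scalar_prod_add_distrib comm_scalar_prod[of w n v])
  also have "\<dots> \<le> (vnorm v + vnorm w)\<^sup>2"
    using abs_scalar_prod_le_vnorm[OF assms] by (simp add: power2_sum vnorm_square)
  finally have "(vnorm (v + w))\<^sup>2 \<le> (vnorm v + vnorm w)\<^sup>2"
    by (simp only: vnorm_square)
  then show ?thesis
    by (meson power2_le_imp_le add_nonneg_nonneg vnorm_nonneg)
qed

lemma vnorm_mono:
  assumes "v \<in> carrier_vec n" "w \<in> carrier_vec n" and "\<And>i. i < n \<Longrightarrow> \<bar>v $ i\<bar> \<le> \<bar>w $ i\<bar>"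
  shows "vnorm v \<le> vnorm w"
proof -
  have "v $ i * v $ i \<le> w $ i * w $ i" if "i < n" for i
    using assms(3)[OF that] by (metis abs_le_square_iff power2_eq_square)
  then show ?thesis
    using assms(1,2) unfolding vnorm_def scalar_prod_def by (auto intro!: sum_mono)
qed

lemma vnorm_mult_mat_vec_le:
  assumes L: "L \<in> carrier_mat k n" and y: "y \<in> carrier_vec n"
  shows "vnorm (L *\<^sub>v y) \<le> sqrt (\<Sum>i<k. row L i \<bullet> row L i) * vnorm y"
proof -
  have "(L *\<^sub>v y) \<bullet> (L *\<^sub>v y) = (\<Sum>i<k. (row L i \<bullet> y)\<^sup>2)"
    using L by (simp add: scalar_prod_def[of "L *\<^sub>v y"] lessThan_atLeast0 power2_eq_square)
  also have "\<dots> \<le> (\<Sum>i<k. (row L i \<bullet> row L i) * (y \<bullet> y))"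
    using L y by (intro sum_mono scalar_prod_square_le[of _ n]) auto
  finally have "(L *\<^sub>v y) \<bullet> (L *\<^sub>v y) \<le> (\<Sum>i<k. row L i \<bullet> row L i) * (y \<bullet> y)"
    by (simp only: sum_distrib_right)
  then show ?thesis
    unfolding vnorm_def real_sqrt_mult[symmetric] by (rule real_sqrt_le_mono)
qed

lemma mat_mult_vec_bounded_below:
  fixes A :: "real mat"
  assumes A: "A \<in> carrier_mat n m"
    and inj: "\<And>c. c \<in> carrier_vec m \<Longrightarrow> A *\<^sub>v c = 0\<^sub>v n \<Longrightarrow> c = 0\<^sub>v m"
  shows "\<exists>C. \<forall>c\<in>carrier_vec m. vnorm c \<le> C * vnorm (A *\<^sub>v c)"
proof -
  define G where "G = transpose_mat A * A"
  have G: "G \<in> carrier_mat m m" using A by (simp add: G_def)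
  have Gram: "(A *\<^sub>v c) \<bullet> (A *\<^sub>v c) = (G *\<^sub>v c) \<bullet> c" if c: "c \<in> carrier_vec m" for c
    using transpose_vec_mult_scalar[OF A c, of "A *\<^sub>v c"] A c by (simp add: G_def)
  have "det G \<noteq> 0"
  proof
    assume "det G = 0"
    then obtain v where v: "v \<in> carrier_vec m" "v \<noteq> 0\<^sub>v m" "G *\<^sub>v v = 0\<^sub>v m"
      using det_0_iff_vec_prod_zero[OF G] by auto
    then have "(A *\<^sub>v v) \<bullet> (A *\<^sub>v v) = 0" using Gram by simp
    then have "A *\<^sub>v v = 0\<^sub>v n"
      using scalar_prod_self_eq_0_iff[of "A *\<^sub>v v" n] A v(1) by simp
    with inj v show False by blast
  qed
  then obtain B where B: "B \<in> carrier_mat m m" and BG: "B * G = 1\<^sub>m m"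
    using det_non_zero_imp_unit[OF G, of undefined] unfolding Units_def ring_mat_def by auto
  define L where "L = B * transpose_mat A"
  have L: "L \<in> carrier_mat m n" using A B by (simp add: L_def)
  have "c = L *\<^sub>v (A *\<^sub>v c)" if c: "c \<in> carrier_vec m" for c
  proof -
    have "c = (B * G) *\<^sub>v c" using BG c by simp
    also have "\<dots> = B *\<^sub>v (transpose_mat A *\<^sub>v (A *\<^sub>v c))"
      using assoc_mult_mat_vec[OF B G c] A c by (simp add: G_def)
    also have "\<dots> = L *\<^sub>v (A *\<^sub>v c)"
      using A B c by (simp add: L_def)
    finally show ?thesis .
  qed
  then have "vnorm c \<le> sqrt (\<Sum>i<m. row L i \<bullet> row L i) * vnorm (A *\<^sub>v c)"
    if "c \<in> carrier_vec m" for c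
    using vnorm_mult_mat_vec_le[OF L, of "A *\<^sub>v c"] A that by simp
  then show ?thesis by blast
qed

section \<open>Diagonal matrices and inverses\<close>

lemma diag_of_carrier [simp]: "diag_of n g \<in> carrier_mat n n"
  by (simp add: diag_of_def)

lemma dim_diag_of [simp]: "dim_row (diag_of n g) = n" "dim_col (diag_of n g) = n"
  by (simp_all add: diag_of_def)

lemma row_diag_of_scalar_prod:
  assumes "v \<in> carrier_vec n" "k < n"
  shows "row (diag_of n g) k \<bullet> v = g k * v $ k"
proof -
  have "row (diag_of n g) k \<bullet> v = (\<Sum>l\<in>{0..<n}. if l = k then g k * v $ k else 0)"
    using assms unfolding scalar_prod_def by (intro sum.cong) (auto simp: diag_of_def)
  then show ?thesis using assms(2) by simp
qed

lemma diag_of_mult_vec: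
  assumes "v \<in> carrier_vec n"
  shows "diag_of n g *\<^sub>v v = vec n (\<lambda>k. g k * v $ k)"
  using assms by (intro eq_vecI) (simp_all add: row_diag_of_scalar_prod)

lemma diag_of_mult: "diag_of n g * diag_of n h = diag_of n (\<lambda>k. g k * h k)"
proof (rule eq_matI)
  fix i l assume "i < dim_row (diag_of n (\<lambda>k. g k * h k))" "l < dim_col (diag_of n (\<lambda>k. g k * h k))"
  then have i: "i < n" and l: "l < n" by simp_all
  have col: "col (diag_of n h) l \<in> carrier_vec n" by (intro carrier_vecI) simp
  have "(diag_of n g * diag_of n h) $$ (i, l) = g i * diag_of n h $$ (i, l)"
    using i l row_diag_of_scalar_prod[OF col i, of g] by simp
  also have "\<dots> = diag_of n (\<lambda>k. g k * h k) $$ (i, l)"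
    using i l by (simp add: diag_of_def)
  finally show "(diag_of n g * diag_of n h) $$ (i, l) = diag_of n (\<lambda>k. g k * h k) $$ (i, l)" .
qed simp_all

lemma diag_of_one: "diag_of n (\<lambda>_. 1) = 1\<^sub>m n"
  by (intro eq_matI) (simp_all add: diag_of_def)

lemma mat_inv_eqI:
  assumes K: "K \<in> carrier_mat n n" and B: "B \<in> carrier_mat n n"
    and KB: "K * B = 1\<^sub>m n" and BK: "B * K = 1\<^sub>m n"
  shows "mat_inv n K = B"
proof -
  have "\<exists>B. B \<in> carrier_mat n n \<and> K * B = 1\<^sub>m n \<and> B * K = 1\<^sub>m n"
    using B KB BK by blast
  then have B': "mat_inv n K \<in> carrier_mat n n" "mat_inv n K * K = 1\<^sub>m n"
    unfolding mat_inv_def by (metis (mono_tags, lifting) someI_ex)+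
  have "mat_inv n K = mat_inv n K * (K * B)" using KB B'(1) by simp
  also have "\<dots> = B" using assoc_mult_mat[OF B'(1) K B] B'(2) B by simp
  finally show ?thesis .
qed

section \<open>Graph Fourier transform and spectral matrices\<close>

locale orthonormal_basis =
  fixes n :: nat and U :: "real mat"
  assumes U_carrier: "U \<in> carrier_mat n n"
    and orthonormal: "transpose_mat U * U = 1\<^sub>m n"
begin

lemma dim_U [simp]: "dim_row U = n" "dim_col U = n"
  using U_carrier by auto

lemma U_mult_transpose: "U * transpose_mat U = 1\<^sub>m n"
  using mat_mult_left_right_inverse[of "transpose_mat U" n U] U_carrier orthonormal by simp

lemma transpose_mult_cancel:
  assumes "X \<in> carrier_mat n k"
  shows "transpose_mat U * (U * X) = X"
  using assoc_mult_mat[of "transpose_mat U" n n U n X k] U_carrier assms orthonormal by simp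

lemma dim_gft [simp]: "dim_vec (gft U x) = n"
  by (simp add: gft_def)

lemma gft_carrier [simp]: "gft U x \<in> carrier_vec n"
  by (intro carrier_vecI) simp

lemma gft_index: "k < n \<Longrightarrow> gft U x $ k = col U k \<bullet> x"
  by (simp add: gft_def)

lemma gft_mult_vec: "c \<in> carrier_vec n \<Longrightarrow> gft U (U *\<^sub>v c) = c"
  using assoc_mult_mat_vec[of "transpose_mat U" n n U n c] U_carrier orthonormal
  by (simp add: gft_def)

lemma mult_vec_gft: "x \<in> carrier_vec n \<Longrightarrow> U *\<^sub>v gft U x = x"
  using assoc_mult_mat_vec[of U n n "transpose_mat U" n x] U_carrier U_mult_transpose
  by (simp add: gft_def)

lemma scalar_prod_mult_vec:
  "x \<in> carrier_vec n \<Longrightarrow> w \<in> carrier_vec n \<Longrightarrow> x \<bullet> (U *\<^sub>v w) = gft U x \<bullet> w"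
  using transpose_vec_mult_scalar[OF U_carrier] by (simp add: gft_def)

lemma gft_scalar_prod:
  "x \<in> carrier_vec n \<Longrightarrow> y \<in> carrier_vec n \<Longrightarrow> gft U x \<bullet> gft U y = x \<bullet> y"
  by (simp add: scalar_prod_mult_vec[symmetric] mult_vec_gft)

lemma vnorm_gft: "x \<in> carrier_vec n \<Longrightarrow> vnorm (gft U x) = vnorm x"
  by (simp add: vnorm_def gft_scalar_prod)

lemma vnorm_mult_vec: "c \<in> carrier_vec n \<Longrightarrow> vnorm (U *\<^sub>v c) = vnorm c"
  using vnorm_gft[of "U *\<^sub>v c"] U_carrier by (simp add: gft_mult_vec)

definition spectral_mat :: "(nat \<Rightarrow> real) \<Rightarrow> real mat" where
  "spectral_mat g = U * diag_of n g * transpose_mat U"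

lemma dim_spectral_mat [simp]: "dim_row (spectral_mat g) = n" "dim_col (spectral_mat g) = n"
  by (simp_all add: spectral_mat_def)

lemma spectral_mat_carrier [simp]: "spectral_mat g \<in> carrier_mat n n"
  unfolding spectral_mat_def using U_carrier
  by (meson mult_carrier_mat diag_of_carrier transpose_carrier_mat)

lemma spectral_mat_mult_vec_carrier [simp]:
  "x \<in> carrier_vec n \<Longrightarrow> spectral_mat g *\<^sub>v x \<in> carrier_vec n"
  using mult_mat_vec_carrier[OF spectral_mat_carrier] .

lemma spectral_mat_mult_vec:
  assumes "x \<in> carrier_vec n"
  shows "spectral_mat g *\<^sub>v x = U *\<^sub>v vec n (\<lambda>k. g k * gft U x $ k)"
proof -
  have "spectral_mat g *\<^sub>v x = (U * diag_of n g) *\<^sub>v gft U x"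
    using assms U_carrier
    by (simp add: spectral_mat_def gft_def assoc_mult_mat_vec[of _ n n _ n] mult_carrier_mat[of _ n n _ n])
  also have "\<dots> = U *\<^sub>v vec n (\<lambda>k. g k * gft U x $ k)"
    using assoc_mult_mat_vec[OF U_carrier diag_of_carrier gft_carrier] by (simp add: diag_of_mult_vec)
  finally show ?thesis .
qed

lemma gft_spectral_mat_mult_vec:
  assumes "x \<in> carrier_vec n"
  shows "gft U (spectral_mat g *\<^sub>v x) = vec n (\<lambda>k. g k * gft U x $ k)"
  using assms by (simp add: spectral_mat_mult_vec gft_mult_vec)

lemma scalar_prod_spectral_mat:
  assumes "x \<in> carrier_vec n" "y \<in> carrier_vec n"
  shows "x \<bullet> (spectral_mat g *\<^sub>v y) = (\<Sum>k<n. g k * gft U x $ k * gft U y $ k)"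
proof -
  have "x \<bullet> (spectral_mat g *\<^sub>v y) = gft U x \<bullet> vec n (\<lambda>k. g k * gft U y $ k)"
    using assms by (simp add: spectral_mat_mult_vec scalar_prod_mult_vec del: index_mult_mat_vec)
  then show ?thesis
    by (simp add: scalar_prod_def lessThan_atLeast0 mult_ac)
qed

lemma spectral_mat_mult: "spectral_mat g * spectral_mat h = spectral_mat (\<lambda>k. g k * h k)"
proof -
  let ?D = "diag_of n g" and ?E = "diag_of n h" and ?V = "transpose_mat U"
  have V: "?V \<in> carrier_mat n n" using U_carrier by simp
  have EV: "?E * ?V \<in> carrier_mat n n" using mult_carrier_mat[OF diag_of_carrier V] .
  have "spectral_mat g * spectral_mat h = U * ?D * (?V * (U * (?E * ?V)))"
    using U_carrier V EV unfolding spectral_mat_def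
    by (simp add: assoc_mult_mat[of _ n n _ n _ n] mult_carrier_mat[of _ n n _ n])
  also have "\<dots> = U * (?D * ?E) * ?V"
    using U_carrier V EV
    by (simp add: transpose_mult_cancel[OF EV] assoc_mult_mat[of _ n n _ n _ n] mult_carrier_mat[of _ n n _ n])
  finally show ?thesis by (simp add: spectral_mat_def diag_of_mult)
qed

lemma spectral_mat_one: "spectral_mat (\<lambda>_. 1) = 1\<^sub>m n"
  using U_carrier by (simp add: spectral_mat_def diag_of_one U_mult_transpose)

lemma spectral_mat_cong: "(\<And>k. k < n \<Longrightarrow> g k = h k) \<Longrightarrow> spectral_mat g = spectral_mat h"
  unfolding spectral_mat_def diag_of_def by (intro arg_cong2[where f = "(*)"] refl eq_matI) auto

lemma mat_inv_spectral_mat: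
  assumes "\<And>k. k < n \<Longrightarrow> g k \<noteq> 0"
  shows "mat_inv n (spectral_mat g) = spectral_mat (\<lambda>k. 1 / g k)"
proof (rule mat_inv_eqI)
  have "spectral_mat (\<lambda>k. g k * (1 / g k)) = 1\<^sub>m n" "spectral_mat (\<lambda>k. 1 / g k * g k) = 1\<^sub>m n"
    using assms spectral_mat_cong[of _ "\<lambda>_. 1"] by (simp_all add: spectral_mat_one)
  then show "spectral_mat g * spectral_mat (\<lambda>k. 1 / g k) = 1\<^sub>m n"
    and "spectral_mat (\<lambda>k. 1 / g k) * spectral_mat g = 1\<^sub>m n"
    by (simp_all add: spectral_mat_mult)
qed simp_all

lemma scalar_prod_spectral_mat_commute:
  assumes "x \<in> carrier_vec n" "y \<in> carrier_vec n"
  shows "x \<bullet> (spectral_mat g *\<^sub>v y) = (spectral_mat g *\<^sub>v x) \<bullet> y"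
proof -
  have "(spectral_mat g *\<^sub>v x) \<bullet> y = y \<bullet> (spectral_mat g *\<^sub>v x)"
    using assms by (intro comm_scalar_prod[of _ n]) simp_all
  then show ?thesis
    using assms by (simp add: scalar_prod_spectral_mat mult_ac)
qed

lemma spectral_mat_quadratic_form:
  "x \<in> carrier_vec n \<Longrightarrow> x \<bullet> (spectral_mat g *\<^sub>v x) = (\<Sum>k<n. g k * (gft U x $ k)\<^sup>2)"
  by (simp add: scalar_prod_spectral_mat power2_eq_square mult_ac)

lemma pos_def_spectral_mat_imp_pos:
  assumes "pos_def_mat n (spectral_mat g)" and k: "k < n"
  shows "g k > 0"
proof -
  define x where "x = U *\<^sub>v unit_vec n k"
  have x: "x \<in> carrier_vec n" using U_carrier by (simp add: x_def)
  have gft_x: "gft U x = unit_vec n k" by (simp add: x_def gft_mult_vec)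
  have "vnorm x = vnorm (unit_vec n k)"
    by (simp add: x_def vnorm_mult_vec)
  also have "\<dots> = 1"
    using k by (simp add: vnorm_def)
  finally have "vnorm x = 1" .
  then have "x \<noteq> 0\<^sub>v n" by (auto simp: vnorm_def)
  with assms(1) x have "0 < x \<bullet> (spectral_mat g *\<^sub>v x)"
    unfolding pos_def_mat_def by blast
  also have "\<dots> = g k"
    using k by (simp add: spectral_mat_quadratic_form[OF x] gft_x if_distrib if_distribR cong: if_cong)
  finally show ?thesis .
qed

lemma abs_scalar_prod_le_spectral:
  assumes g: "\<And>k. k < n \<Longrightarrow> g k > 0" and e: "e \<in> carrier_vec n" and x: "x \<in> carrier_vec n"
  shows "\<bar>e \<bullet> x\<bar>
    \<le> sqrt (e \<bullet> (spectral_mat g *\<^sub>v e)) * sqrt (x \<bullet> (spectral_mat (\<lambda>k. 1 / g k) *\<^sub>v x))"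
proof -
  define a where "a k = sqrt (g k) * gft U e $ k" for k
  define b where "b k = gft U x $ k / sqrt (g k)" for k
  have "e \<bullet> x = (\<Sum>k<n. gft U e $ k * gft U x $ k)"
    unfolding gft_scalar_prod[OF e x, symmetric] by (simp add: scalar_prod_def lessThan_atLeast0)
  also have "\<dots> = (\<Sum>k<n. a k * b k)"
  proof (rule sum.cong)
    fix k assume "k \<in> {..<n}"
    then have "sqrt (g k) \<noteq> 0" using g[of k] by simp
    then show "gft U e $ k * gft U x $ k = a k * b k" by (simp add: a_def b_def)
  qed simp
  finally have "e \<bullet> x = (\<Sum>k<n. a k * b k)" .
  moreover have "(\<Sum>k<n. (a k)\<^sup>2) = e \<bullet> (spectral_mat g *\<^sub>v e)"
    using g by (simp add: spectral_mat_quadratic_form[OF e] a_def power_mult_distrib less_imp_le)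
  moreover have "(\<Sum>k<n. (b k)\<^sup>2) = x \<bullet> (spectral_mat (\<lambda>k. 1 / g k) *\<^sub>v x)"
    using g by (simp add: spectral_mat_quadratic_form[OF x] b_def power_divide less_imp_le)
  ultimately have "(e \<bullet> x)\<^sup>2
      \<le> (e \<bullet> (spectral_mat g *\<^sub>v e)) * (x \<bullet> (spectral_mat (\<lambda>k. 1 / g k) *\<^sub>v x))"
    using Cauchy_Schwarz_ineq_sum[of a b "{..<n}"] by simp
  then show ?thesis
    by (metis real_sqrt_abs real_sqrt_le_mono real_sqrt_mult)
qed

lemma conv_op_eq_spectral_mat: "conv_op U x = spectral_mat (\<lambda>k. gft U x $ k)"
  by (simp add: conv_op_def spectral_mat_def)

lemma conv_op_mult_vec_commute:
  "x \<in> carrier_vec n \<Longrightarrow> y \<in> carrier_vec n \<Longrightarrow> conv_op U x *\<^sub>v y = conv_op U y *\<^sub>v x"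
  by (simp add: conv_op_eq_spectral_mat spectral_mat_mult_vec mult.commute)

lemma kernel_mat_eq_conv_op:
  assumes f: "f \<in> carrier_vec n"
  shows "kernel_mat U f = conv_op U f"
proof (rule eq_matI)
  fix i l assume "i < dim_row (conv_op U f)" "l < dim_col (conv_op U f)"
  then have i: "i < n" and l: "l < n"
    using spectral_mat_carrier by (simp_all add: conv_op_eq_spectral_mat)
  have "kernel_mat U f $$ (i, l) = (conv_op U f *\<^sub>v unit_vec n l) $ i"
    using i l f by (simp add: kernel_mat_def conv_op_mult_vec_commute[of _ f] del: index_mult_mat_vec)
  also have "\<dots> = conv_op U f $$ (i, l)"
    using i l spectral_mat_carrier by (simp add: conv_op_eq_spectral_mat)
  finally show "kernel_mat U f $$ (i, l) = conv_op U f $$ (i, l)" .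
qed (use spectral_mat_carrier in \<open>simp_all add: kernel_mat_def conv_op_eq_spectral_mat\<close>)

lemma kernel_mat_eq_spectral_mat:
  "f \<in> carrier_vec n \<Longrightarrow> kernel_mat U f = spectral_mat (\<lambda>k. gft U f $ k)"
  by (simp add: kernel_mat_eq_conv_op conv_op_eq_spectral_mat)

lemma pos_def_fun_imp_gft_pos:
  "f \<in> carrier_vec n \<Longrightarrow> pos_def_fun U f \<Longrightarrow> k < n \<Longrightarrow> 0 < gft U f $ k"
  by (rule pos_def_spectral_mat_imp_pos) (simp_all add: pos_def_fun_def kernel_mat_eq_spectral_mat)

lemma native_norm_eq_spectral:
  assumes f: "f \<in> carrier_vec n" and pd: "pos_def_fun U f"
  shows "native_norm U f x = sqrt (x \<bullet> (spectral_mat (\<lambda>k. 1 / gft U f $ k) *\<^sub>v x))"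
  using pos_def_fun_imp_gft_pos[OF f pd]
  by (simp add: native_norm_def kernel_mat_eq_spectral_mat[OF f] mat_inv_spectral_mat less_imp_neq[symmetric])

lemma native_norm_nonneg:
  assumes f: "f \<in> carrier_vec n" and pd: "pos_def_fun U f" and x: "x \<in> carrier_vec n"
  shows "0 \<le> native_norm U f x"
  using pos_def_fun_imp_gft_pos[OF f pd] x
  by (auto simp: native_norm_eq_spectral[OF f pd] spectral_mat_quadratic_form less_imp_le
      intro!: sum_nonneg)

section \<open>Band-limited vectors and norming sets\<close>

lemma bandlimited_vec_eq:
  assumes "M \<le> n"
  shows "vec n (\<lambda>i. \<Sum>k<M. c k * U $$ (i, k)) = U *\<^sub>v vec n (\<lambda>k. if k < M then c k else 0)"
proof (rule eq_vecI)
  fix i assume "i < dim_vec (U *\<^sub>v vec n (\<lambda>k. if k < M then c k else 0))"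
  then have i: "i < n" by simp
  have "(\<Sum>k<n. U $$ (i, k) * (if k < M then c k else 0)) = (\<Sum>k<n. if k < M then c k * U $$ (i, k) else 0)"
    by (intro sum.cong) auto
  then show "vec n (\<lambda>i. \<Sum>k<M. c k * U $$ (i, k)) $ i = (U *\<^sub>v vec n (\<lambda>k. if k < M then c k else 0)) $ i"
    using i assms by (simp add: scalar_prod_def atLeast0LessThan sum_if_less_eq)
qed simp

lemma vnorm_bandlimited_vec:
  assumes M: "M \<le> n" and c: "c \<in> carrier_vec M"
  shows "vnorm (vec n (\<lambda>i. \<Sum>k<M. c $ k * U $$ (i, k))) = vnorm c"
proof -
  have "vnorm (vec n (\<lambda>i. \<Sum>k<M. c $ k * U $$ (i, k))) = vnorm (vec n (\<lambda>k. if k < M then c $ k else 0))"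
    using M by (simp add: bandlimited_vec_eq vnorm_mult_vec)
  also have "\<dots> = vnorm c"
    using M c by (simp add: vnorm_def scalar_prod_def atLeast0LessThan if_distrib sum_if_less_eq
        cong: if_cong)
  finally show ?thesis .
qed

lemma bandlimited_carrier: "b \<in> bandlimited U M \<Longrightarrow> b \<in> carrier_vec n"
  by (auto simp: bandlimited_def)

lemma zero_in_bandlimited: "0\<^sub>v n \<in> bandlimited U M"
  unfolding bandlimited_def by (auto intro!: exI[of _ "\<lambda>_. 0"])

lemma bl_proj_carrier [simp]: "bl_proj U M x \<in> carrier_vec n"
  by (simp add: bl_proj_def)

lemma bl_proj_in_bandlimited: "bl_proj U M x \<in> bandlimited U M"
  unfolding bl_proj_def bandlimited_def by (auto simp: mult.commute intro: exI[of _ "\<lambda>k. col U k \<bullet> x"])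

lemma bl_proj_eq_spectral_mat:
  assumes M: "M \<le> n" and x: "x \<in> carrier_vec n"
  shows "bl_proj U M x = spectral_mat (\<lambda>k. if k < M then 1 else 0) *\<^sub>v x"
proof -
  have "bl_proj U M x = vec n (\<lambda>i. \<Sum>k<M. gft U x $ k * U $$ (i, k))"
    using M by (intro eq_vecI) (simp_all add: bl_proj_def gft_index)
  also have "\<dots> = U *\<^sub>v vec n (\<lambda>k. if k < M then gft U x $ k else 0)"
    using M by (rule bandlimited_vec_eq)
  also have "vec n (\<lambda>k. if k < M then gft U x $ k else 0) = vec n (\<lambda>k. (if k < M then 1 else 0) * gft U x $ k)"
    by (intro eq_vecI) simp_all
  finally show ?thesis using x by (simp add: spectral_mat_mult_vec)
qed

lemma bl_proj_bandlimited:
  assumes M: "M \<le> n" and b: "b \<in> bandlimited U M"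
  shows "bl_proj U M b = b"
proof -
  obtain c where c: "b = U *\<^sub>v vec n (\<lambda>k. if k < M then c k else 0)"
    using b M by (auto simp: bandlimited_def bandlimited_vec_eq)
  then have "gft U b = vec n (\<lambda>k. if k < M then c k else 0)"
    using U_carrier by (simp add: gft_mult_vec)
  then have "vec n (\<lambda>k. (if k < M then 1 else 0) * gft U b $ k) = gft U b"
    by (intro eq_vecI) simp_all
  then show ?thesis
    using M bandlimited_carrier[OF b] by (simp add: bl_proj_eq_spectral_mat spectral_mat_mult_vec mult_vec_gft)
qed

lemma gft_sub_bl_proj:
  assumes M: "M \<le> n" and x: "x \<in> carrier_vec n"
  shows "gft U (x - bl_proj U M x) = vec n (\<lambda>k. if k < M then 0 else gft U x $ k)"
proof -
  have "gft U (x - bl_proj U M x) = gft U x - gft U (bl_proj U M x)"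
    unfolding gft_def using x U_carrier by (intro mult_minus_distrib_mat_vec) auto
  then show ?thesis
    using M x by (intro eq_vecI) (simp_all add: bl_proj_eq_spectral_mat gft_spectral_mat_mult_vec)
qed

lemma vnorm_sub_bl_proj_square:
  assumes M: "M \<le> n" and x: "x \<in> carrier_vec n"
  shows "(vnorm (x - bl_proj U M x))\<^sup>2 = (\<Sum>k\<in>{M..<n}. (gft U x $ k)\<^sup>2)"
proof -
  have "(vnorm (x - bl_proj U M x))\<^sup>2 = gft U (x - bl_proj U M x) \<bullet> gft U (x - bl_proj U M x)"
    using x by (simp add: vnorm_square gft_scalar_prod)
  also have "\<dots> = (\<Sum>k<n. if k < M then 0 else (gft U x $ k)\<^sup>2)"
    using M x by (simp add: gft_sub_bl_proj scalar_prod_def atLeast0LessThan if_distrib power2_eq_square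
        cong: if_cong)
  finally show ?thesis by (simp add: sum_if_less_else_eq)
qed

lemma SB_op_carrier [simp]: "SB_op U M N j x \<in> carrier_vec n"
  by (intro carrier_vecI) (simp add: SB_op_def sampling_op_def bl_proj_def)

lemma SB_op_bandlimited:
  "M \<le> n \<Longrightarrow> b \<in> bandlimited U M \<Longrightarrow> SB_op U M N j b = sampling_op N j b"
  by (simp add: SB_op_def bl_proj_bandlimited)

lemma SB_op_zero: "M \<le> n \<Longrightarrow> SB_op U M N j (0\<^sub>v n) = 0\<^sub>v n"
  by (simp add: SB_op_bandlimited zero_in_bandlimited) (auto simp: sampling_op_def)

lemma SB_op_bounded_below:
  assumes M: "M \<le> n" and norming: "norming_set U M N j"
  shows "\<exists>C. \<forall>b\<in>bandlimited U M. vnorm b \<le> C * vnorm (SB_op U M N j b)"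
proof -
  define A where "A = mat n M (\<lambda>(i, k). if i \<in> j ` {..<N} then U $$ (i, k) else 0)"
  define emb where "emb c = vec n (\<lambda>i. \<Sum>k<M. c $ k * U $$ (i, k))" for c :: "real vec"
  have emb_B: "emb c \<in> bandlimited U M" for c
    unfolding bandlimited_def emb_def by auto
  have SB_emb: "SB_op U M N j (emb c) = A *\<^sub>v c" if "c \<in> carrier_vec M" for c
    using that M emb_B[of c]
    by (intro eq_vecI) (auto simp: SB_op_bandlimited sampling_op_def emb_def A_def
        scalar_prod_def atLeast0LessThan mult.commute)
  have vnorm_emb: "vnorm (emb c) = vnorm c" if "c \<in> carrier_vec M" for c
    unfolding emb_def using M that by (rule vnorm_bandlimited_vec)
  have "\<exists>C. \<forall>c\<in>carrier_vec M. vnorm c \<le> C * vnorm (A *\<^sub>v c)"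
  proof (rule mat_mult_vec_bounded_below)
    show "A \<in> carrier_mat n M" by (simp add: A_def)
    fix c :: "real vec" assume c: "c \<in> carrier_vec M" and "A *\<^sub>v c = 0\<^sub>v n"
    moreover have "A *\<^sub>v 0\<^sub>v M = 0\<^sub>v n"
      by (intro eq_vecI) (auto simp: A_def)
    ultimately have "SB_op U M N j (emb c) = SB_op U M N j (emb (0\<^sub>v M))" by (simp add: SB_emb)
    then have "emb c = emb (0\<^sub>v M)"
      using norming emb_B unfolding norming_set_def by (meson inj_onD)
    then have "vnorm c = 0" using vnorm_emb[OF c] vnorm_emb[of "0\<^sub>v M"] by (simp add: vnorm_def)
    then show "c = 0\<^sub>v M" using c vnorm_pos by fastforce
  qed
  moreover have "\<exists>c\<in>carrier_vec M. b = emb c" if "b \<in> bandlimited U M" for b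
    using that unfolding bandlimited_def emb_def by (auto intro!: bexI[of _ "vec M _"])
  ultimately show ?thesis using SB_emb vnorm_emb by metis
qed

lemma SB_inv_norm_bound:
  assumes M: "M \<le> n" and norming: "norming_set U M N j"
  shows SB_inv_norm_nonneg: "0 \<le> SB_inv_norm U M N j"
    and vnorm_le_SB_inv_norm:
      "b \<in> bandlimited U M \<Longrightarrow> vnorm b \<le> SB_inv_norm U M N j * vnorm (SB_op U M N j b)"
proof -
  let ?T = "SB_op U M N j" and ?B = "bandlimited U M"
  define S where "S = {vnorm (inv_into ?B ?T z) / vnorm z | z. z \<in> ?T ` ?B \<and> z \<noteq> 0\<^sub>v n}"
  have inj: "inj_on ?T ?B" using norming unfolding norming_set_def .
  have SB_eq: "SB_inv_norm U M N j = Sup (insert 0 S)"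
    unfolding SB_inv_norm_def S_def Let_def by simp
  have ratio_in_S: "vnorm b / vnorm (?T b) \<in> S" if "b \<in> ?B" "?T b \<noteq> 0\<^sub>v n" for b
    unfolding S_def using that inv_into_f_f[OF inj that(1)] by (intro CollectI exI[of _ "?T b"]) auto
  obtain C where C: "\<forall>b\<in>?B. vnorm b \<le> C * vnorm (?T b)"
    using SB_op_bounded_below[OF M norming] by blast
  have "s \<le> C" if "s \<in> S" for s
  proof -
    obtain b where b: "b \<in> ?B" "?T b \<noteq> 0\<^sub>v n" and s: "s = vnorm b / vnorm (?T b)"
      using \<open>s \<in> S\<close> inv_into_f_f[OF inj] unfolding S_def by auto
    then show ?thesis
      using C vnorm_pos[OF SB_op_carrier b(2)] by (simp add: divide_le_eq)
  qed
  then have bdd: "bdd_above (insert 0 S)" by (intro bdd_aboveI[of _ "max 0 C"]) force+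
  then show nonneg: "0 \<le> SB_inv_norm U M N j"
    unfolding SB_eq by (intro cSup_upper) simp_all
  assume b: "b \<in> ?B"
  show "vnorm b \<le> SB_inv_norm U M N j * vnorm (?T b)"
  proof (cases "?T b = 0\<^sub>v n")
    case True
    then have "b = 0\<^sub>v n"
      using inj b zero_in_bandlimited SB_op_zero[OF M] by (metis inj_onD)
    then show ?thesis using nonneg vnorm_nonneg by (simp add: vnorm_def)
  next
    case False
    then have "vnorm b / vnorm (?T b) \<le> SB_inv_norm U M N j"
      unfolding SB_eq using bdd ratio_in_S[OF b] by (intro cSup_upper) simp_all
    then show ?thesis using vnorm_pos[OF SB_op_carrier False] by (simp add: divide_le_eq)
  qed
qed

lemma vnorm_le_if_vanishes_at_nodes:
  assumes M: "M \<le> n" and norming: "norming_set U M N j"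
    and r: "r \<in> carrier_vec n" and vanish: "\<forall>k<N. r $ j k = 0"
  shows "vnorm r \<le> (1 + SB_inv_norm U M N j) * vnorm (r - bl_proj U M r)"
proof -
  define P where "P = bl_proj U M r"
  define Q where "Q = r - P"
  have P: "P \<in> carrier_vec n" and Q: "Q \<in> carrier_vec n" using r by (simp_all add: P_def Q_def)
  have "vnorm (sampling_op N j P) \<le> vnorm Q"
  proof (rule vnorm_mono)
    fix i assume "i < n"
    then show "\<bar>sampling_op N j P $ i\<bar> \<le> \<bar>Q $ i\<bar>"
      using P r vanish by (auto simp: sampling_op_def Q_def)
  qed (use P Q in \<open>auto simp: sampling_op_def intro!: carrier_vecI\<close>)
  then have "SB_inv_norm U M N j * vnorm (sampling_op N j P) \<le> SB_inv_norm U M N j * vnorm Q"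
    using SB_inv_norm_nonneg[OF M norming] by (rule mult_left_mono)
  moreover have "vnorm P \<le> SB_inv_norm U M N j * vnorm (sampling_op N j P)"
    using vnorm_le_SB_inv_norm[OF M norming bl_proj_in_bandlimited, of r]
    by (simp add: P_def SB_op_bandlimited[OF M bl_proj_in_bandlimited])
  ultimately have "vnorm P \<le> SB_inv_norm U M N j * vnorm Q" by linarith
  moreover have "P + Q = r" using P r by (intro eq_vecI) (auto simp: Q_def)
  then have "vnorm r \<le> vnorm P + vnorm Q" using vnorm_triangle[OF P Q] by simp
  ultimately show ?thesis by (simp add: Q_def P_def algebra_simps)
qed

lemma vnorm_sub_bl_proj_spectral_square_le:
  assumes g: "\<And>k. k < n \<Longrightarrow> 0 < g k" and M: "M \<le> n" and e: "e \<in> carrier_vec n"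
  defines "r \<equiv> spectral_mat g *\<^sub>v e"
  shows "(vnorm (r - bl_proj U M r))\<^sup>2 \<le> (\<Sum>k\<in>{M..<n}. g k) * (e \<bullet> r)"
proof -
  define w where "w k = g k * (gft U e $ k)\<^sup>2" for k
  have w: "0 \<le> w k" if "k < n" for k using g[OF that] by (simp add: w_def)
  have "(vnorm (r - bl_proj U M r))\<^sup>2 = (\<Sum>k\<in>{M..<n}. (g k * gft U e $ k)\<^sup>2)"
    using M e by (simp add: r_def vnorm_sub_bl_proj_square gft_spectral_mat_mult_vec)
  also have "\<dots> = (\<Sum>k\<in>{M..<n}. g k * w k)"
    by (simp add: w_def power2_eq_square mult_ac)
  also have "\<dots> \<le> (\<Sum>k\<in>{M..<n}. (\<Sum>i\<in>{M..<n}. g i) * w k)"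
  proof (rule sum_mono)
    fix k assume k: "k \<in> {M..<n}"
    have "g k \<le> (\<Sum>i\<in>{M..<n}. g i)"
      using k g by (intro member_le_sum) (auto intro: less_imp_le)
    then show "g k * w k \<le> (\<Sum>i\<in>{M..<n}. g i) * w k"
      using k w by (intro mult_right_mono) auto
  qed
  also have "\<dots> \<le> (\<Sum>i\<in>{M..<n}. g i) * (\<Sum>k<n. w k)"
    unfolding sum_distrib_left[symmetric] using g w
    by (intro mult_left_mono sum_nonneg sum_mono2) (auto intro: less_imp_le)
  also have "(\<Sum>k<n. w k) = e \<bullet> r"
    using e by (simp add: r_def spectral_mat_quadratic_form w_def)
  finally show ?thesis .
qed

lemma worst_case_error_le:
  assumes g: "\<And>k. k < n \<Longrightarrow> 0 < g k" and M: "M \<le> n" and norming: "norming_set U M N j"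
    and e: "e \<in> carrier_vec n"
    and vanish: "\<forall>k<N. (spectral_mat g *\<^sub>v e) $ j k = 0"
    and error_le_vnorm: "e \<bullet> (spectral_mat g *\<^sub>v e) \<le> vnorm (spectral_mat g *\<^sub>v e)"
  shows "sqrt (e \<bullet> (spectral_mat g *\<^sub>v e)) \<le> (1 + SB_inv_norm U M N j) * sqrt (\<Sum>k\<in>{M..<n}. g k)"
proof -
  define r where "r = spectral_mat g *\<^sub>v e"
  define C where "C = 1 + SB_inv_norm U M N j"
  define T where "T = (\<Sum>k\<in>{M..<n}. g k)"
  have r: "r \<in> carrier_vec n" using e by (simp add: r_def)
  have C: "0 \<le> C" using SB_inv_norm_nonneg[OF M norming] by (simp add: C_def)
  have R: "0 \<le> e \<bullet> r"
    using e g by (simp add: r_def spectral_mat_quadratic_form) (auto intro!: sum_nonneg simp: less_imp_le)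
  have "vnorm (r - bl_proj U M r) \<le> sqrt (T * (e \<bullet> r))"
    using vnorm_sub_bl_proj_spectral_square_le[OF g M e] by (simp add: real_le_rsqrt r_def T_def)
  then have "C * vnorm (r - bl_proj U M r) \<le> C * sqrt T * sqrt (e \<bullet> r)"
    using C by (simp add: mult_left_mono real_sqrt_mult mult.assoc)
  moreover have "e \<bullet> r \<le> C * vnorm (r - bl_proj U M r)"
    using error_le_vnorm vnorm_le_if_vanishes_at_nodes[OF M norming r] vanish by (simp add: r_def C_def)
  ultimately have "e \<bullet> r \<le> C * sqrt T * sqrt (e \<bullet> r)" by linarith
  moreover have "0 \<le> T" unfolding T_def using g by (intro sum_nonneg) (auto intro: less_imp_le)
  ultimately have "sqrt (e \<bullet> r) \<le> C * sqrt T"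
    using C R by (intro sqrt_le_if_le_mult_sqrt) simp_all
  then show ?thesis by (simp add: r_def C_def T_def)
qed

end

section \<open>Quadrature error\<close>

definition quadrature_error_vec ::
    "nat \<Rightarrow> nat \<Rightarrow> (nat \<Rightarrow> nat) \<Rightarrow> (nat \<Rightarrow> real) \<Rightarrow> real vec" where
  "quadrature_error_vec n N j mu = vec n (\<lambda>i. 1 / real n - (\<Sum>k<N. if j k = i then mu k else 0))"

lemma quadrature_error_vec_carrier [simp]: "quadrature_error_vec n N j mu \<in> carrier_vec n"
  by (simp add: quadrature_error_vec_def)

lemma quadrature_error_vec_scalar_prod:
  assumes j: "\<forall>k<N. j k < n" and x: "x \<in> carrier_vec n"
  shows "quadrature_error_vec n N j mu \<bullet> x = 1 / real n * (\<Sum>i<n. x $ i) - (\<Sum>k<N. mu k * x $ j k)"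
proof -
  have "(\<Sum>i<n. (\<Sum>k<N. if j k = i then mu k else 0) * x $ i)
      = (\<Sum>i<n. \<Sum>k<N. if j k = i then mu k * x $ i else 0)"
    by (simp add: sum_distrib_right if_distrib if_distribR cong: if_cong)
  also have "\<dots> = (\<Sum>k<N. \<Sum>i<n. if j k = i then mu k * x $ i else 0)"
    by (rule sum.swap)
  also have "\<dots> = (\<Sum>k<N. mu k * x $ j k)"
    using j by simp
  finally show ?thesis
    using x by (simp add: quadrature_error_vec_def scalar_prod_def atLeast0LessThan left_diff_distrib
        sum_subtractf sum_distrib_left)
qed

lemma quadrature_error_vec_scalar_prod_le:
  assumes j: "\<forall>k<N. j k < n" and r: "r \<in> carrier_vec n" and vanish: "\<forall>k<N. r $ j k = 0"
  shows "quadrature_error_vec n N j mu \<bullet> r \<le> vnorm r"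
proof -
  define one where "one = (vec n (\<lambda>_. 1) :: real vec)"
  have one: "one \<in> carrier_vec n" by (simp add: one_def)
  have "quadrature_error_vec n N j mu \<bullet> r = (one \<bullet> r) / real n"
    using quadrature_error_vec_scalar_prod[OF j r] vanish r
    by (simp add: one_def scalar_prod_def atLeast0LessThan)
  also have "\<dots> \<le> vnorm one * vnorm r / real n"
    using abs_scalar_prod_le_vnorm[OF one r] by (simp add: divide_right_mono)
  also have "vnorm one = sqrt (real n)"
    by (simp add: one_def vnorm_def scalar_prod_def)
  also have "sqrt (real n) * vnorm r / real n \<le> vnorm r"
  proof (cases "n = 0")
    case False
    have "real n \<le> (real n)\<^sup>2"
      unfolding power2_eq_square of_nat_mult[symmetric] of_nat_le_iff by (rule le_square)
    then have "sqrt (real n) \<le> real n" by (intro real_le_lsqrt) simp_all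
    then have "sqrt (real n) * vnorm r \<le> real n * vnorm r"
      using vnorm_nonneg[of r] by (rule mult_right_mono)
    then show ?thesis using False by (simp add: divide_le_eq algebra_simps)
  qed (simp add: vnorm_nonneg)
  finally show ?thesis .
qed

context orthonormal_basis
begin

lemma kernel_mat_error_vanishes_at_nodes:
  assumes f: "f \<in> carrier_vec n" and j: "\<forall>k<N. j k < n"
    and exact: "\<forall>y \<in> native_span U f N j. (1 / real n) * (\<Sum>i<n. y $ i) = (\<Sum>k<N. mu k * y $ j k)"
  shows "\<forall>m<N. (kernel_mat U f *\<^sub>v quadrature_error_vec n N j mu) $ j m = 0"
proof (intro allI impI)
  fix m assume m: "m < N"
  let ?e = "quadrature_error_vec n N j mu" and ?u = "unit_vec n (j m) :: real vec"
  define y where "y = conv_op U ?u *\<^sub>v f"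
  have y: "y \<in> carrier_vec n" using f by (simp add: y_def conv_op_eq_spectral_mat)
  have "y = vec n (\<lambda>i. \<Sum>k<N. of_bool (k = m) * (conv_op U (unit_vec n (j k)) *\<^sub>v f) $ i)"
    using y m by (intro eq_vecI) (simp_all add: y_def conv_op_eq_spectral_mat)
  then have "y \<in> native_span U f N j"
    unfolding native_span_def by (intro CollectI exI[of _ "\<lambda>k. of_bool (k = m)"]) simp
  then have "?e \<bullet> y = 0" using exact quadrature_error_vec_scalar_prod[OF j y] by simp
  moreover have "y = conv_op U f *\<^sub>v ?u"
    using conv_op_mult_vec_commute[of ?u f] f by (simp add: y_def)
  ultimately show "(kernel_mat U f *\<^sub>v ?e) $ j m = 0"
    using f j m scalar_prod_spectral_mat_commute[of ?e ?u]
    by (simp add: kernel_mat_eq_spectral_mat conv_op_eq_spectral_mat)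
qed

end

theorem corollary3:
  fixes n M N :: nat and A U :: "real mat" and lam :: "nat \<Rightarrow> real"
    and f :: "real vec" and j :: "nat \<Rightarrow> nat" and mu :: "nat \<Rightarrow> real"
  assumes A_carrier: "A \<in> carrier_mat n n"
    and A_sym: "transpose_mat A = A"
    and A_nonneg: "\<forall>i<n. \<forall>k<n. A $$ (i, k) \<ge> 0"
    and deg_pos: "\<forall>i<n. Defs.degree A i > 0"
    and U_carrier: "U \<in> carrier_mat n n"
    and U_orth: "transpose_mat U * U = 1\<^sub>m n"
    and eigen: "norm_laplacian A = U * diag_of n lam * transpose_mat U"
    and f_carrier: "f \<in> carrier_vec n"
    and f_pd: "pos_def_fun U f"
    and M_le: "M \<le> n"
    and j_range: "\<forall>k<N. j k < n"
    and j_inj: "inj_on j {..<N}"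
    and norming: "norming_set U M N j"
    and exact: "\<forall>y \<in> native_span U f N j.
                  (1 / real n) * (\<Sum>i<n. y $ i) = (\<Sum>k<N. mu k * y $ j k)"
  shows "\<forall>x \<in> carrier_vec n.
           \<bar>(1 / real n) * (\<Sum>i<n. x $ i) - (\<Sum>k<N. mu k * x $ j k)\<bar>
             \<le> (1 + SB_inv_norm U M N j) * sqrt (\<Sum>k\<in>{M..<n}. gft U f $ k) * native_norm U f x"
proof (intro ballI)
  fix x :: "real vec" assume x: "x \<in> carrier_vec n"
  interpret orthonormal_basis n U using U_carrier U_orth by unfold_locales
  define g where "g = (\<lambda>k. gft U f $ k)"
  define e where "e = quadrature_error_vec n N j mu"
  have g_pos: "\<And>k. k < n \<Longrightarrow> 0 < g k"
    unfolding g_def by (rule pos_def_fun_imp_gft_pos[OF f_carrier f_pd])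
  have e: "e \<in> carrier_vec n" by (simp add: e_def)
  have vanish: "\<forall>k<N. (spectral_mat g *\<^sub>v e) $ j k = 0"
    using kernel_mat_error_vanishes_at_nodes[OF f_carrier j_range exact]
    by (simp add: kernel_mat_eq_spectral_mat[OF f_carrier] e_def g_def)
  have "\<bar>(1 / real n) * (\<Sum>i<n. x $ i) - (\<Sum>k<N. mu k * x $ j k)\<bar> = \<bar>e \<bullet> x\<bar>"
    using quadrature_error_vec_scalar_prod[OF j_range x] by (simp add: e_def)
  also have "\<dots> \<le> sqrt (e \<bullet> (spectral_mat g *\<^sub>v e)) * native_norm U f x"
    using abs_scalar_prod_le_spectral[OF g_pos e x] by (simp add: native_norm_eq_spectral f_carrier f_pd g_def)
  also have "\<dots> \<le> (1 + SB_inv_norm U M N j) * sqrt (\<Sum>k\<in>{M..<n}. g k) * native_norm U f x"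
    using worst_case_error_le[OF g_pos M_le norming e vanish] vanish
      quadrature_error_vec_scalar_prod_le[OF j_range] native_norm_nonneg[OF f_carrier f_pd x]
    by (intro mult_right_mono) (simp_all add: e_def)
  finally show "\<bar>(1 / real n) * (\<Sum>i<n. x $ i) - (\<Sum>k<N. mu k * x $ j k)\<bar>
      \<le> (1 + SB_inv_norm U M N j) * sqrt (\<Sum>k\<in>{M..<n}. gft U f $ k) * native_norm U f x"
    by (simp add: g_def)
qed

end
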